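(* Let $\lambda,\varepsilon,\sigma\in\mathbb{R}$ and $(x_0,y_0)\in\mathbb{R}^2\setminus\{(0,0)\}$. For a step size $0<\Delta t<1$, let $t_n=n\Delta t$ and let $\Delta B_{1,n}=B_1(t_{n+1})-B_1(t_n)$, where $B_1$ is a standard scalar Brownian motion on a complete probability space $(\Omega,\mathcal F,\mathbb P)$. Define the real sequence $\{\rho_n\}_{n\ge0}$ (the Milstein approximation of the modulus $|Z|$ of the solution of the system described in the context) by $\rho_0=\sqrt{x_0^2+y_0^2}$ and $$\rho_n=\rho_{n-1}\Big[1+\Big(\lambda+\tfrac{\varepsilon^2}{2}-\tfrac{\sigma^2}{2}\Big)\Delta t+\sigma\Delta B_{1,n-1}+\tfrac{\sigma^2}{2}\Delta B_{1,n-1}^2\Big],\quad n\ge1.$$ Then there exist $0<\Delta t_1<1$ and constants $C_1,C_2>0$ such that for all $0<\Delta t<\Delta t_1$, $$\lambda+\tfrac{\varepsilon^2}{2}+\tfrac{\sigma^2}{2}-C_1\Delta t\le\limsup_{n\to\infty}\frac{1}{t_n}\log\big[\mathbb E\rho_n^2\big]^{1/2}\le\lambda+\tfrac{\varepsilon^2}{2}+\tfrac{\sigma^2}{2}+C_1\Delta t,$$ and, almost surely, $$\lambda+\tfrac{\varepsilon^2}{2}-\tfrac{\sigma^2}{2}-C_2\Delta t^{1/2}\le\limsup_{n\to\infty}\frac{1}{t_n}\log|\rho_n|\le\lambda+\tfrac{\varepsilon^2}{2}-\tfrac{\sigma^2}{2}+C_2\Delta t^{1/2}.$$ Consequently, for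 all step sizes $0<\Delta t<\Delta t_1$: (a) if $\lambda+\frac{\varepsilon^2}{2}+\frac{\sigma^2}{2}<0$ then $\rho_n$ is mean-square exponentially stable, and if $\lambda+\frac{\varepsilon^2}{2}+\frac{\sigma^2}{2}>0$ then $\rho_n$ is mean-square exponentially blowing up; (b) if $\lambda+\frac{\varepsilon^2}{2}-\frac{\sigma^2}{2}<0$ then $\rho_n$ is almost-surely exponentially stable, and if $\lambda+\frac{\varepsilon^2}{2}-\frac{\sigma^2}{2}>0$ then $\rho_n$ is almost-surely exponentially blowing up.
   Context: The sequence $\rho_n$ is the Milstein approximation (denoted $|Z_n|$ in the paper) of the Euclidean norm $|Z(t)|$ of the solution $Z=(X,Y)^\top$ of the linear system $dZ=\lambda Z\,dt+\sigma Z\,dB_1(t)+\varepsilon\begin{pmatrix}0&-1\\1&0\end{pmatrix}Z\,dB_2(t)$, $Z(0)=(x_0,y_0)$, with $B_1,B_2$ standard scalar Brownian motions; by Itô's formula $d\log|Z|=(\lambda-\frac{\sigma^2-\varepsilon^2}{2})dt+\sigma dB_1$. Terminology: $\rho_n$ is mean-square exponentially stable if there exist $C,\alpha>0$ with $[\mathbb E\rho_n^2]^{1/2}\le Ce^{-\alpha t_n}$ for all large $n$, and mean-square exponentially blowing up if there exist $C,\beta>0$ with $[\mathbb E\rho_n^2]^{1/2}\ge Ce^{\beta t_n}$ for all large $n$; almost-surely exponentially stable (resp. blowing up) means that almost surely $|\rho_n|\le Ce^{-\alpha t_n}$ (resp. $|\rho_n|\ge Ce^{\beta t_n}$) for all large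 $n$, for some $\alpha>0$ (resp. $\beta>0$) and a (possibly random) constant $C>0$. $\Delta t_1$ and the constants may depend on $\lambda,\varepsilon,\sigma$. *)

theory Defs
  imports "HOL-Probability.Probability"
begin

definition brownian_motion :: "'a measure \<Rightarrow> (real \<Rightarrow> 'a \<Rightarrow> real) \<Rightarrow> bool" where
  "brownian_motion M B \<longleftrightarrow>
     prob_space M \<and>
     (\<forall>A N. N \<in> null_sets M \<and> A \<subseteq> N \<longrightarrow> A \<in> sets M) \<and>
     (\<forall>t. B t \<in> borel_measurable M) \<and>
     (AE \<omega> in M. B 0 \<omega> = 0) \<and>
     (\<forall>s t. 0 \<le> s \<and> s < t \<longrightarrow>
        distributed M lborel (\<lambda>\<omega>. B t \<omega> - B s \<omega>) (normal_density 0 (sqrt (t - s)))) \<and>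
     (\<forall>(n::nat) (ts::nat \<Rightarrow> real). 0 \<le> ts 0 \<and> (\<forall>i<n. ts i < ts (Suc i)) \<longrightarrow>
        prob_space.indep_vars M (\<lambda>_. borel) (\<lambda>i \<omega>. B (ts (Suc i)) \<omega> - B (ts i) \<omega>) {..<n}) \<and>
     (AE \<omega> in M. continuous_on {0..} (\<lambda>t. B t \<omega>))"

primrec milstein_rho ::
  "real \<Rightarrow> real \<Rightarrow> real \<Rightarrow> real \<Rightarrow> real \<Rightarrow> (real \<Rightarrow> 'a \<Rightarrow> real) \<Rightarrow> real \<Rightarrow> nat \<Rightarrow> 'a \<Rightarrow> real"
where
  "milstein_rho lam eps sig x0 y0 B dt 0 \<omega> = sqrt (x0\<^sup>2 + y0\<^sup>2)"
| "milstein_rho lam eps sig x0 y0 B dt (Suc n) \<omega> =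
     milstein_rho lam eps sig x0 y0 B dt n \<omega> *
     (1 + (lam + eps\<^sup>2 / 2 - sig\<^sup>2 / 2) * dt
        + sig * (B (real (Suc n) * dt) \<omega> - B (real n * dt) \<omega>)
        + sig\<^sup>2 / 2 * (B (real (Suc n) * dt) \<omega> - B (real n * dt) \<omega>)\<^sup>2)"

definition ms_exp_stable :: "'a measure \<Rightarrow> (nat \<Rightarrow> 'a \<Rightarrow> real) \<Rightarrow> real \<Rightarrow> bool" where
  "ms_exp_stable M rho dt \<longleftrightarrow> (\<exists>C \<alpha>. C > 0 \<and> \<alpha> > 0 \<and>
     (\<forall>\<^sub>F n in sequentially. sqrt (integral\<^sup>L M (\<lambda>\<omega>. (rho n \<omega>)\<^sup>2)) \<le> C * exp (- \<alpha> * (real n * dt))))"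

definition ms_exp_blowup :: "'a measure \<Rightarrow> (nat \<Rightarrow> 'a \<Rightarrow> real) \<Rightarrow> real \<Rightarrow> bool" where
  "ms_exp_blowup M rho dt \<longleftrightarrow> (\<exists>C \<beta>. C > 0 \<and> \<beta> > 0 \<and>
     (\<forall>\<^sub>F n in sequentially. sqrt (integral\<^sup>L M (\<lambda>\<omega>. (rho n \<omega>)\<^sup>2)) \<ge> C * exp (\<beta> * (real n * dt))))"

definition as_exp_stable :: "'a measure \<Rightarrow> (nat \<Rightarrow> 'a \<Rightarrow> real) \<Rightarrow> real \<Rightarrow> bool" where
  "as_exp_stable M rho dt \<longleftrightarrow> (\<exists>\<alpha>>0. AE \<omega> in M. \<exists>C>0.
     (\<forall>\<^sub>F n in sequentially. \<bar>rho n \<omega>\<bar> \<le> C * exp (- \<alpha> * (real n * dt))))"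

definition as_exp_blowup :: "'a measure \<Rightarrow> (nat \<Rightarrow> 'a \<Rightarrow> real) \<Rightarrow> real \<Rightarrow> bool" where
  "as_exp_blowup M rho dt \<longleftrightarrow> (\<exists>\<beta>>0. AE \<omega> in M. \<exists>C>0.
     (\<forall>\<^sub>F n in sequentially. \<bar>rho n \<omega>\<bar> \<ge> C * exp (\<beta> * (real n * dt))))"

end

theory Submission
  imports Defs
begin

text \<open>With a = lam + eps^2/2 - sig^2/2 the scheme is rho_n = rho_0 * prod_{k<n} g(Delta B_k), where
  g(x) = 1 + a dt + sig x + sig^2 x^2 / 2 is at least 1/4 for small dt and the increments Delta B_k
  are i.i.d. N(0, dt). Hence E rho_n^2 = rho_0^2 m^n with m = E g^2 = 1 + 2 (a + sig^2) dt + O(dt^2),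
  so the mean-square exponent is exactly ln m / (2 dt) = a + sig^2 + O(dt).
  Almost surely, ln rho_n - ln rho_0 is a sum of n i.i.d. copies of ln g(Delta B), whose mean is
  a dt + O(dt^2) by Taylor bounds on ln (1 + u) and the Gaussian moments up to order 8. A Chernoff
  bound on its moment generating function together with Borel-Cantelli shows that the sum is
  eventually within n dt^(3/2) of its mean, so the almost-sure exponent is a + O(dt^(1/2)).
  Stability and blow-up follow once dt is so small that the error terms cannot change the sign
  of the exponents.\<close>

section \<open>Moments of centred Gaussian random variables\<close>

lemma normal_moment_rv:
  fixes X :: "'a \<Rightarrow> real"
  assumes X: "distributed M lborel X (normal_density 0 (sqrt v))" and v: "0 < v"
  shows integrable_normal_moment_rv: "integrable M (\<lambda>\<omega>. X \<omega> ^ k)"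
    and integral_normal_moment_rv:
      "(\<integral>\<omega>. X \<omega> ^ k \<partial>M) = (if odd k then 0 else fact k / (2 ^ (k div 2) * fact (k div 2)) * v ^ (k div 2))"
proof -
  have sv: "0 < sqrt v" using v by simp
  show "integrable M (\<lambda>\<omega>. X \<omega> ^ k)"
    using distributed_integrable[OF X, of "\<lambda>x. x ^ k"] integrable_normal_moment[OF sv, of 0 k] by simp
  have "(\<integral>\<omega>. X \<omega> ^ k \<partial>M) = (\<integral>x. normal_density 0 (sqrt v) x * x ^ k \<partial>lborel)"
    using distributed_integral[OF X, of "\<lambda>x. x ^ k"] by simp
  also have "\<dots> = (if odd k then 0 else fact k / (2 ^ (k div 2) * fact (k div 2)) * v ^ (k div 2))"
  proof (cases "odd k")
    case True
    then obtain m where "k = 2 * m + 1" by (metis oddE)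
    with True show ?thesis using integral_normal_moment_odd[OF sv, of 0 m] by simp
  next
    case False
    then obtain m where k: "k = 2 * m" by (metis evenE)
    show ?thesis
      using False integral_normal_moment_even[OF sv, of 0 m] v
      unfolding k by (simp add: power_divide field_simps)
  qed
  finally show "(\<integral>\<omega>. X \<omega> ^ k \<partial>M) = \<dots>" .
qed

lemma (in prob_space) normal_poly8_integral:
  fixes X :: "'a \<Rightarrow> real" and c0 c1 c2 c3 c4 c5 c6 c7 c8 :: real
  assumes X: "distributed M lborel X (normal_density 0 (sqrt v))" and v: "0 < v"
  shows "integrable M (\<lambda>\<omega>. c0 + c1 * X \<omega> + c2 * X \<omega>^2 + c3 * X \<omega>^3 + c4 * X \<omega>^4
      + c5 * X \<omega>^5 + c6 * X \<omega>^6 + c7 * X \<omega>^7 + c8 * X \<omega>^8)"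
    and "(\<integral>\<omega>. c0 + c1 * X \<omega> + c2 * X \<omega>^2 + c3 * X \<omega>^3 + c4 * X \<omega>^4
      + c5 * X \<omega>^5 + c6 * X \<omega>^6 + c7 * X \<omega>^7 + c8 * X \<omega>^8 \<partial>M)
      = c0 + c2 * v + 3 * c4 * v^2 + 15 * c6 * v^3 + 105 * c8 * v^4"
proof -
  have int: "integrable M (\<lambda>\<omega>. c * X \<omega> ^ k)" for c k
    using integrable_normal_moment_rv[OF X v] by simp
  have int1: "integrable M (\<lambda>\<omega>. c * X \<omega>)" for c
    using int[of c 1] by simp
  show "integrable M (\<lambda>\<omega>. c0 + c1 * X \<omega> + c2 * X \<omega>^2 + c3 * X \<omega>^3 + c4 * X \<omega>^4
      + c5 * X \<omega>^5 + c6 * X \<omega>^6 + c7 * X \<omega>^7 + c8 * X \<omega>^8)"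
    by (intro Bochner_Integration.integrable_add int int1 integrable_const)
  have mom: "(\<integral>\<omega>. X \<omega> \<partial>M) = 0" "(\<integral>\<omega>. X \<omega>^2 \<partial>M) = v" "(\<integral>\<omega>. X \<omega>^3 \<partial>M) = 0"
     "(\<integral>\<omega>. X \<omega>^4 \<partial>M) = 3 * v^2" "(\<integral>\<omega>. X \<omega>^5 \<partial>M) = 0"
     "(\<integral>\<omega>. X \<omega>^6 \<partial>M) = 15 * v^3" "(\<integral>\<omega>. X \<omega>^7 \<partial>M) = 0"
     "(\<integral>\<omega>. X \<omega>^8 \<partial>M) = 105 * v^4"
    using integral_normal_moment_rv[OF X v, of 1] integral_normal_moment_rv[OF X v, of 2]
      integral_normal_moment_rv[OF X v, of 3] integral_normal_moment_rv[OF X v, of 4]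
      integral_normal_moment_rv[OF X v, of 5] integral_normal_moment_rv[OF X v, of 6]
      integral_normal_moment_rv[OF X v, of 7] integral_normal_moment_rv[OF X v, of 8]
    by (simp_all add: fact_numeral)
  show "(\<integral>\<omega>. c0 + c1 * X \<omega> + c2 * X \<omega>^2 + c3 * X \<omega>^3 + c4 * X \<omega>^4
      + c5 * X \<omega>^5 + c6 * X \<omega>^6 + c7 * X \<omega>^7 + c8 * X \<omega>^8 \<partial>M)
      = c0 + c2 * v + 3 * c4 * v^2 + 15 * c6 * v^3 + 105 * c8 * v^4"
    by (subst Bochner_Integration.integral_add; (intro Bochner_Integration.integrable_add int int1 integrable_const)?)+
       (simp add: mom prob_space)
qed

section \<open>Elementary inequalities for ln and exp\<close>

lemma DERIV_sign_change_imp_min: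
  fixes h h' :: "real \<Rightarrow> real"
  assumes "lo < 0" "lo < u"
    and deriv: "\<And>t. lo < t \<Longrightarrow> DERIV h t :> h' t"
    and nonpos: "\<And>t. lo < t \<Longrightarrow> t \<le> 0 \<Longrightarrow> h' t \<le> 0"
    and nonneg: "\<And>t. 0 \<le> t \<Longrightarrow> 0 \<le> h' t"
  shows "h 0 \<le> h u"
proof (cases "0 \<le> u")
  case True
  show ?thesis
  proof (rule DERIV_nonneg_imp_nondecreasing[OF True])
    fix x :: real assume "0 \<le> x"
    then show "\<exists>y. DERIV h x :> y \<and> 0 \<le> y"
      using deriv[of x] nonneg[of x] assms(1) by auto
  qed
next
  case False
  show ?thesis
  proof (rule DERIV_nonpos_imp_nonincreasing[of u 0])
    fix x :: real assume "u \<le> x" "x \<le> 0"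
    then show "\<exists>y. DERIV h x :> y \<and> y \<le> 0"
      using deriv[of x] nonpos[of x] assms(2) by auto
  qed (use False in simp)
qed

lemma ln_one_plus_le_cubic:
  fixes u :: real
  assumes "-1 < u"
  shows "ln (1 + u) \<le> u - u^2/2 + u^3/3"
proof -
  define h where "h t = t - t^2/2 + t^3/3 - ln (1 + t)" for t :: real
  have "DERIV h t :> t^3 / (1 + t)" if "-1 < t" for t
  proof -
    have "DERIV h t :> 1 - t + t^2 - 1 / (1 + t)"
      unfolding h_def using that by (auto intro!: derivative_eq_intros simp: field_simps power2_eq_square)
    moreover have "1 - t + t^2 - 1 / (1 + t) = t^3 / (1 + t)"
      using that by (simp add: field_simps power2_eq_square power3_eq_cube)
    ultimately show ?thesis by simp
  qed
  moreover have "t^3 \<le> 0" if "t \<le> 0" for t :: real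
    using that by (simp add: power_le_zero_eq)
  ultimately have "h 0 \<le> h u"
    by (intro DERIV_sign_change_imp_min[of "-1" u h "\<lambda>t. t^3 / (1 + t)"])
       (use assms in \<open>auto simp: divide_nonpos_pos\<close>)
  then show ?thesis by (simp add: h_def)
qed

lemma ln_one_plus_ge_quartic:
  fixes u :: real
  assumes "-3/4 \<le> u"
  shows "u - u^2/2 + u^3/3 - 64 * u^4 \<le> ln (1 + u)"
proof -
  define h where "h t = ln (1 + t) - (t - t^2/2 + t^3/3 - 64 * t^4)" for t :: real
  have "DERIV h t :> t^3 * (256 - 1 / (1 + t))" if "-1 < t" for t
  proof -
    have "DERIV h t :> 1 / (1 + t) - (1 - t + t^2 - 256 * t^3)"
      unfolding h_def using that by (auto intro!: derivative_eq_intros simp: field_simps power2_eq_square)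
    moreover have "1 / (1 + t) - (1 - t + t^2 - 256 * t^3) = t^3 * (256 - 1 / (1 + t))"
      using that by (simp add: field_simps power2_eq_square power3_eq_cube)
    ultimately show ?thesis by simp
  qed
  moreover have "1 / (1 + t) \<le> 256" if "-255/256 < t" for t :: real
    using that by (simp add: field_simps)
  moreover have "t^3 \<le> 0" if "t \<le> 0" for t :: real
    using that by (simp add: power_le_zero_eq)
  ultimately have "h 0 \<le> h u"
    by (intro DERIV_sign_change_imp_min[of "-255/256" u h "\<lambda>t. t^3 * (256 - 1 / (1 + t))"])
       (use assms in \<open>auto intro: mult_nonpos_nonneg\<close>)
  then show ?thesis by (simp add: h_def)
qed

lemma exp_le_quadratic_exp_abs:
  fixes y :: real
  shows "exp y \<le> 1 + y + y^2/2 * exp \<bar>y\<bar>"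
proof (cases "0 \<le> y")
  case True
  define h where "h t = 1 + t + t^2/2 * exp t - exp t" for t :: real
  have "h 0 \<le> h y"
  proof (rule DERIV_nonneg_imp_nondecreasing[OF True])
    fix x :: real assume "0 \<le> x"
    have "DERIV h x :> 1 - exp x * (1 - x - x^2/2)"
      unfolding h_def by (auto intro!: derivative_eq_intros simp: field_simps power2_eq_square)
    moreover have "1 - x - x^2/2 \<le> exp (-x)"
      using exp_ge_add_one_self[of "-x"] zero_le_power2[of x] by linarith
    then have "exp x * (1 - x - x^2/2) \<le> exp x * exp (-x)"
      by (intro mult_left_mono) auto
    ultimately show "\<exists>z. DERIV h x :> z \<and> 0 \<le> z"
      by (auto simp: exp_minus)
  qed
  with True show ?thesis by (simp add: h_def)
next
  case False
  define h where "h t = 1 + t + t^2/2 - exp t" for t :: real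
  have "h 0 \<le> h y"
  proof (rule DERIV_nonpos_imp_nonincreasing[of y 0])
    fix x :: real
    have "DERIV h x :> 1 + x - exp x"
      unfolding h_def by (auto intro!: derivative_eq_intros simp: field_simps power2_eq_square)
    then show "\<exists>z. DERIV h x :> z \<and> z \<le> 0"
      using exp_ge_add_one_self[of x] by auto
  qed (use False in simp)
  then have "exp y \<le> 1 + y + y^2/2" by (simp add: h_def)
  also have "\<dots> \<le> 1 + y + y^2/2 * exp \<bar>y\<bar>"
    by (simp add: mult_le_cancel_left1 del: exp_le_cancel_iff)
  finally show ?thesis .
qed

lemma abs_ln_one_plus_le:
  fixes u :: real
  assumes "-3/4 \<le> u"
  shows "\<bar>ln (1 + u)\<bar> \<le> 4 * \<bar>u\<bar>"
proof (cases "0 \<le> u")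
  case True
  then show ?thesis using ln_add_one_self_le_self2[of u] ln_ge_zero[of "1 + u"] by simp
next
  case False
  have "ln (1 / (1 + u)) \<le> 1 / (1 + u) - 1"
    using assms by (intro ln_le_minus_one) auto
  then have "- ln (1 + u) \<le> - u / (1 + u)"
    using assms by (simp add: ln_div field_simps)
  also have "\<dots> = - u * (1 / (1 + u))"
    by simp
  also have "\<dots> \<le> - u * 4"
    using assms False by (intro mult_left_mono) (auto simp: field_simps)
  finally show ?thesis using False ln_add_one_self_le_self2[of u] assms by simp
qed

lemma exp_abs_ln_le:
  fixes g :: real
  assumes "1/4 \<le> g"
  shows "exp \<bar>ln g\<bar> \<le> g + 4"
proof (cases "1 \<le> g")
  case False
  with assms have "exp \<bar>ln g\<bar> = 1 / g" by (simp add: exp_minus inverse_eq_divide)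
  also have "\<dots> \<le> 4" using assms by (simp add: field_simps)
  finally show ?thesis using assms by linarith
qed simp

lemma exp_mult_ln_one_plus_le:
  fixes u \<theta> :: real
  assumes u: "-3/4 \<le> u" and \<theta>: "\<bar>\<theta>\<bar> \<le> 1"
  shows exp_mult_ln_one_plus_le_linear: "exp (\<theta> * ln (1 + u)) \<le> u + 5"
    and exp_mult_ln_one_plus_le_quadratic:
      "exp (\<theta> * ln (1 + u)) \<le> 1 + \<theta> * ln (1 + u) + 8 * \<theta>^2 * (u^3 + 5 * u^2)"
proof -
  let ?L = "ln (1 + u)"
  have "\<bar>\<theta> * ?L\<bar> \<le> \<bar>?L\<bar>" using \<theta> by (simp add: abs_mult mult_left_le_one_le)
  then have "exp \<bar>\<theta> * ?L\<bar> \<le> exp \<bar>?L\<bar>" by simp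
  also have "\<dots> \<le> u + 5" using exp_abs_ln_le[of "1 + u"] u by simp
  finally have exp_abs: "exp \<bar>\<theta> * ?L\<bar> \<le> u + 5" .
  then show "exp (\<theta> * ?L) \<le> u + 5"
    by (meson abs_ge_self exp_le_cancel_iff order_trans)
  have "?L^2 \<le> (4 * \<bar>u\<bar>)^2"
    using abs_ln_one_plus_le[OF u] by (metis abs_ge_zero power2_abs power_mono)
  then have sq: "(\<theta> * ?L)^2 \<le> \<theta>^2 * (16 * u^2)"
    by (simp add: power_mult_distrib mult_left_mono)
  have "exp (\<theta> * ?L) \<le> 1 + \<theta> * ?L + (\<theta> * ?L)^2 / 2 * exp \<bar>\<theta> * ?L\<bar>"
    by (rule exp_le_quadratic_exp_abs)
  also have "(\<theta> * ?L)^2 / 2 * exp \<bar>\<theta> * ?L\<bar> \<le> \<theta>^2 * (16 * u^2) / 2 * (u + 5)"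
    using sq exp_abs by (intro mult_mono divide_right_mono) auto
  also have "\<theta>^2 * (16 * u^2) / 2 * (u + 5) = 8 * \<theta>^2 * (u^3 + 5 * u^2)"
    by (simp add: power2_eq_square power3_eq_cube algebra_simps)
  finally show "exp (\<theta> * ?L) \<le> 1 + \<theta> * ?L + 8 * \<theta>^2 * (u^3 + 5 * u^2)" by simp
qed

lemma ln_one_plus_quadratic_rate:
  fixes c K dt :: real
  assumes dt: "0 < dt" "dt \<le> 1" and small: "dt * (2 * \<bar>c\<bar> + \<bar>K\<bar>) \<le> 1/2"
  shows "\<bar>ln (1 + 2 * c * dt + K * dt^2) / (2 * dt) - c\<bar> \<le> ((2 * \<bar>c\<bar> + \<bar>K\<bar>)^2 + \<bar>K\<bar>) * dt"
proof -
  define x where "x = 2 * c * dt + K * dt^2"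
  have "\<bar>x\<bar> \<le> dt * (2 * \<bar>c\<bar>) + dt^2 * \<bar>K\<bar>"
    unfolding x_def using dt abs_triangle_ineq[of "2 * c * dt" "K * dt^2"] by (simp add: abs_mult algebra_simps)
  also have "dt^2 * \<bar>K\<bar> \<le> dt * \<bar>K\<bar>"
    using dt by (intro mult_right_mono) (auto simp: power2_eq_square)
  finally have x: "\<bar>x\<bar> \<le> dt * (2 * \<bar>c\<bar> + \<bar>K\<bar>)" by (simp add: algebra_simps)
  then have "\<bar>ln (1 + x) - x\<bar> \<le> 2 * x^2"
    using small by (intro abs_ln_one_plus_x_minus_x_bound) simp
  also have "x^2 \<le> (dt * (2 * \<bar>c\<bar> + \<bar>K\<bar>))^2"
    using x by (metis abs_ge_zero power2_abs power_mono)
  finally have ln_err: "\<bar>ln (1 + x) - x\<bar> / (2 * dt) \<le> (2 * \<bar>c\<bar> + \<bar>K\<bar>)^2 * dt"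
    using dt by (simp add: field_simps power2_eq_square)
  have "ln (1 + x) / (2 * dt) - c = (ln (1 + x) - x) / (2 * dt) + K * dt / 2"
    unfolding x_def using dt by (simp add: field_simps power2_eq_square)
  then have "\<bar>ln (1 + x) / (2 * dt) - c\<bar> \<le> \<bar>ln (1 + x) - x\<bar> / (2 * dt) + \<bar>K\<bar> * dt / 2"
    using dt abs_triangle_ineq[of "(ln (1 + x) - x) / (2 * dt)" "K * dt / 2"] by (simp add: abs_divide abs_mult)
  moreover have "1 + 2 * c * dt + K * dt^2 = 1 + x"
    by (simp add: x_def)
  moreover have "0 \<le> \<bar>K\<bar> * dt"
    using dt by simp
  ultimately show ?thesis
    using ln_err by (simp add: algebra_simps)
qed

section \<open>One step of the scheme\<close>

definition milstein_factor :: "real \<Rightarrow> real \<Rightarrow> real \<Rightarrow> real \<Rightarrow> real" where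
  "milstein_factor a s dt x = 1 + a * dt + s * x + s^2/2 * x^2"

definition milstein_mom2_coeff :: "real \<Rightarrow> real \<Rightarrow> real" where
  "milstein_mom2_coeff a s = 3/4 * s^4 + a * s^2 + a^2"

definition milstein_mom3_coeff :: "real \<Rightarrow> real \<Rightarrow> real \<Rightarrow> real" where
  "milstein_mom3_coeff a s dt =
     9/2 * s^4 + 3 * a * s^2 + dt * (15/8 * s^6 + 9/4 * a * s^4 + 3/2 * a^2 * s^2 + a^3)"

definition milstein_mom4_coeff :: "real \<Rightarrow> real \<Rightarrow> real \<Rightarrow> real" where
  "milstein_mom4_coeff a s dt =
     3 * s^4 + dt * (45/2 * s^6 + 18 * a * s^4 + 6 * a^2 * s^2)
     + dt^2 * (105/16 * s^8 + 15/2 * a * s^6 + 9/2 * a^2 * s^4 + 2 * a^3 * s^2 + a^4)"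

definition milstein_ms_factor :: "real \<Rightarrow> real \<Rightarrow> real \<Rightarrow> real" where
  "milstein_ms_factor a s dt = 1 + 2 * (a + s^2) * dt + milstein_mom2_coeff a s * dt^2"

definition milstein_mgf_coeff :: "real \<Rightarrow> real \<Rightarrow> real \<Rightarrow> real" where
  "milstein_mgf_coeff a s dt =
     8 * (dt^2 * milstein_mom3_coeff a s dt + 5 * (s^2 * dt + dt^2 * milstein_mom2_coeff a s))"

definition milstein_log_drift :: "real \<Rightarrow> real \<Rightarrow> real \<Rightarrow> real" where
  "milstein_log_drift a s dt =
     (\<integral>x. normal_density 0 (sqrt dt) x * ln (milstein_factor a s dt x) \<partial>lborel)"

lemma milstein_factor_ge_quarter:
  assumes "\<bar>a\<bar> * dt \<le> 1/4" "0 \<le> dt"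
  shows "1/4 \<le> milstein_factor a s dt x"
proof -
  have "milstein_factor a s dt x = (1 + s * x)^2/2 + 1/2 + a * dt"
    unfolding milstein_factor_def by (simp add: power2_eq_square field_simps)
  moreover have "- \<bar>a\<bar> * dt \<le> a * dt"
    using assms(2) by (intro mult_right_mono) auto
  ultimately show ?thesis
    using assms(1) zero_le_power2[of "1 + s * x"] by linarith
qed

lemma milstein_factor_borel [measurable]: "milstein_factor a s dt \<in> borel_measurable borel"
  unfolding milstein_factor_def by measurable

locale milstein_step = prob_space M for M :: "'a measure" +
  fixes X :: "'a \<Rightarrow> real" and dt a s :: real
  assumes X_normal: "distributed M lborel X (normal_density 0 (sqrt dt))"
    and dt_pos: "0 < dt"
    and drift_small: "\<bar>a\<bar> * dt \<le> 1/4"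
begin

definition incr :: "'a \<Rightarrow> real" where
  "incr \<omega> = a * dt + s * X \<omega> + s^2/2 * X \<omega>^2"

lemma X_measurable [measurable]: "X \<in> borel_measurable M"
  using distributed_measurable[OF X_normal] by simp

lemma factor_eq: "milstein_factor a s dt (X \<omega>) = 1 + incr \<omega>"
  unfolding incr_def milstein_factor_def by simp

lemma incr_ge: "-3/4 \<le> incr \<omega>"
  using milstein_factor_ge_quarter[OF drift_small, of s "X \<omega>"] dt_pos by (simp add: factor_eq)

lemmas integral_poly8_X = normal_poly8_integral[OF X_normal dt_pos]

lemma incr_moment1: "integrable M incr" "(\<integral>\<omega>. incr \<omega> \<partial>M) = (a + s^2/2) * dt"
proof -
  have eq: "incr = (\<lambda>\<omega>. a * dt + s * X \<omega> + s^2/2 * X \<omega>^2 + 0 * X \<omega>^3 + 0 * X \<omega>^4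
      + 0 * X \<omega>^5 + 0 * X \<omega>^6 + 0 * X \<omega>^7 + 0 * X \<omega>^8)"
    by (simp add: incr_def fun_eq_iff)
  show "integrable M incr"
    unfolding eq by (rule integral_poly8_X)
  show "(\<integral>\<omega>. incr \<omega> \<partial>M) = (a + s^2/2) * dt"
    unfolding eq integral_poly8_X by (simp add: algebra_simps)
qed

lemma incr_moment2:
  "integrable M (\<lambda>\<omega>. incr \<omega> ^ 2)"
  "(\<integral>\<omega>. incr \<omega> ^ 2 \<partial>M) = s^2 * dt + dt^2 * milstein_mom2_coeff a s"
proof -
  define c q where "c = a * dt" and "q = s^2/2"
  have eq: "(\<lambda>\<omega>. incr \<omega> ^ 2) = (\<lambda>\<omega>. c^2 + 2 * c * s * X \<omega> + (s^2 + 2 * c * q) * X \<omega>^2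
      + 2 * s * q * X \<omega>^3 + q^2 * X \<omega>^4 + 0 * X \<omega>^5 + 0 * X \<omega>^6 + 0 * X \<omega>^7 + 0 * X \<omega>^8)"
    unfolding incr_def c_def[symmetric] q_def[symmetric] by (rule ext) algebra
  show "integrable M (\<lambda>\<omega>. incr \<omega> ^ 2)"
    unfolding eq by (rule integral_poly8_X)
  show "(\<integral>\<omega>. incr \<omega> ^ 2 \<partial>M) = s^2 * dt + dt^2 * milstein_mom2_coeff a s"
    unfolding eq integral_poly8_X c_def q_def milstein_mom2_coeff_def by (simp add: field_simps) algebra
qed

lemma incr_moment3:
  "integrable M (\<lambda>\<omega>. incr \<omega> ^ 3)"
  "(\<integral>\<omega>. incr \<omega> ^ 3 \<partial>M) = dt^2 * milstein_mom3_coeff a s dt"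
proof -
  define c q where "c = a * dt" and "q = s^2/2"
  have eq: "(\<lambda>\<omega>. incr \<omega> ^ 3) = (\<lambda>\<omega>. c^3 + 3 * c^2 * s * X \<omega> + (3 * c * s^2 + 3 * c^2 * q) * X \<omega>^2
      + (s^3 + 6 * c * s * q) * X \<omega>^3 + (3 * s^2 * q + 3 * c * q^2) * X \<omega>^4
      + 3 * s * q^2 * X \<omega>^5 + q^3 * X \<omega>^6 + 0 * X \<omega>^7 + 0 * X \<omega>^8)"
    unfolding incr_def c_def[symmetric] q_def[symmetric] by (rule ext) algebra
  show "integrable M (\<lambda>\<omega>. incr \<omega> ^ 3)"
    unfolding eq by (rule integral_poly8_X)
  show "(\<integral>\<omega>. incr \<omega> ^ 3 \<partial>M) = dt^2 * milstein_mom3_coeff a s dt"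
    unfolding eq integral_poly8_X c_def q_def milstein_mom3_coeff_def by (simp add: field_simps) algebra
qed

lemma incr_moment4:
  "integrable M (\<lambda>\<omega>. incr \<omega> ^ 4)"
  "(\<integral>\<omega>. incr \<omega> ^ 4 \<partial>M) = dt^2 * milstein_mom4_coeff a s dt"
proof -
  define c q where "c = a * dt" and "q = s^2/2"
  have eq: "(\<lambda>\<omega>. incr \<omega> ^ 4) = (\<lambda>\<omega>. c^4 + 4 * c^3 * s * X \<omega> + (6 * c^2 * s^2 + 4 * c^3 * q) * X \<omega>^2
      + (4 * c * s^3 + 12 * c^2 * s * q) * X \<omega>^3 + (s^4 + 12 * c * s^2 * q + 6 * c^2 * q^2) * X \<omega>^4
      + (4 * s^3 * q + 12 * c * s * q^2) * X \<omega>^5 + (6 * s^2 * q^2 + 4 * c * q^3) * X \<omega>^6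
      + 4 * s * q^3 * X \<omega>^7 + q^4 * X \<omega>^8)"
    unfolding incr_def c_def[symmetric] q_def[symmetric] by (rule ext) algebra
  show "integrable M (\<lambda>\<omega>. incr \<omega> ^ 4)"
    unfolding eq by (rule integral_poly8_X)
  show "(\<integral>\<omega>. incr \<omega> ^ 4 \<partial>M) = dt^2 * milstein_mom4_coeff a s dt"
    unfolding eq integral_poly8_X c_def q_def milstein_mom4_coeff_def by (simp add: field_simps) algebra
qed

lemma integral_factor_sq:
  "integrable M (\<lambda>\<omega>. (milstein_factor a s dt (X \<omega>))^2)"
  "(\<integral>\<omega>. (milstein_factor a s dt (X \<omega>))^2 \<partial>M) = milstein_ms_factor a s dt"
proof -
  have eq: "(\<lambda>\<omega>. (milstein_factor a s dt (X \<omega>))^2) = (\<lambda>\<omega>. 1 + 2 * incr \<omega> + incr \<omega> ^ 2)"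
    by (simp add: factor_eq power2_eq_square algebra_simps)
  show "integrable M (\<lambda>\<omega>. (milstein_factor a s dt (X \<omega>))^2)"
    unfolding eq using incr_moment1(1) incr_moment2(1) by simp
  show "(\<integral>\<omega>. (milstein_factor a s dt (X \<omega>))^2 \<partial>M) = milstein_ms_factor a s dt"
    unfolding eq using incr_moment1 incr_moment2
    by (simp add: prob_space milstein_ms_factor_def algebra_simps)
qed

lemma ms_factor_pos: "0 < milstein_ms_factor a s dt"
proof -
  have "(\<integral>\<omega>. (1/4)^2 \<partial>M) \<le> (\<integral>\<omega>. (milstein_factor a s dt (X \<omega>))^2 \<partial>M)"
    using milstein_factor_ge_quarter[OF drift_small] dt_pos integral_factor_sq(1)
    by (intro integral_mono power_mono) auto
  then show ?thesis
    unfolding integral_factor_sq(2) by (simp add: prob_space power2_eq_square)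
qed

lemma integrable_ln_factor: "integrable M (\<lambda>\<omega>. ln (milstein_factor a s dt (X \<omega>)))"
proof (rule Bochner_Integration.integrable_bound)
  show "integrable M (\<lambda>\<omega>. \<bar>incr \<omega> - incr \<omega>^2/2 + incr \<omega>^3/3\<bar> + 64 * incr \<omega>^4)"
    using incr_moment1(1) incr_moment2(1) incr_moment3(1) incr_moment4(1) by simp
  show "AE \<omega> in M. norm (ln (milstein_factor a s dt (X \<omega>)))
      \<le> norm (\<bar>incr \<omega> - incr \<omega>^2/2 + incr \<omega>^3/3\<bar> + 64 * incr \<omega>^4)"
  proof (rule AE_I2)
    fix \<omega>
    have "-1 < incr \<omega>" using incr_ge[of \<omega>] by simp
    then show "norm (ln (milstein_factor a s dt (X \<omega>)))
        \<le> norm (\<bar>incr \<omega> - incr \<omega>^2/2 + incr \<omega>^3/3\<bar> + 64 * incr \<omega>^4)"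
      using ln_one_plus_le_cubic[of "incr \<omega>"] ln_one_plus_ge_quartic[OF incr_ge, of \<omega>]
        zero_le_even_power[of 4 "incr \<omega>"]
      unfolding factor_eq by (simp add: abs_le_iff) linarith
  qed
qed simp

lemma integral_ln_factor: "(\<integral>\<omega>. ln (milstein_factor a s dt (X \<omega>)) \<partial>M) = milstein_log_drift a s dt"
  unfolding milstein_log_drift_def
  by (rule distributed_integral[OF X_normal, symmetric]) (simp_all add: normal_density_nonneg)

lemma log_drift_bound:
  "\<bar>milstein_log_drift a s dt - a * dt\<bar>
     \<le> dt^2 * (\<bar>milstein_mom2_coeff a s\<bar>/2 + \<bar>milstein_mom3_coeff a s dt\<bar>/3 + 64 * \<bar>milstein_mom4_coeff a s dt\<bar>)"
proof -
  let ?p = "\<lambda>\<omega>. incr \<omega> - incr \<omega>^2/2 + incr \<omega>^3/3"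
  have int_p: "integrable M ?p" and int_q: "integrable M (\<lambda>\<omega>. ?p \<omega> - 64 * incr \<omega>^4)"
    using incr_moment1(1) incr_moment2(1) incr_moment3(1) incr_moment4(1) by simp_all
  have E_p: "(\<integral>\<omega>. ?p \<omega> \<partial>M) = a * dt - dt^2 * milstein_mom2_coeff a s / 2 + dt^2 * milstein_mom3_coeff a s dt / 3"
    using incr_moment1 incr_moment2 incr_moment3 by (simp add: algebra_simps)
  have E_q: "(\<integral>\<omega>. ?p \<omega> - 64 * incr \<omega>^4 \<partial>M) = (\<integral>\<omega>. ?p \<omega> \<partial>M) - 64 * (dt^2 * milstein_mom4_coeff a s dt)"
    using int_p incr_moment4 by simp
  have "milstein_log_drift a s dt \<le> (\<integral>\<omega>. ?p \<omega> \<partial>M)"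
    unfolding integral_ln_factor[symmetric]
  proof (intro integral_mono integrable_ln_factor int_p)
    fix \<omega>
    have "-1 < incr \<omega>" using incr_ge[of \<omega>] by simp
    then show "ln (milstein_factor a s dt (X \<omega>)) \<le> ?p \<omega>"
      unfolding factor_eq by (rule ln_one_plus_le_cubic)
  qed
  moreover have "(\<integral>\<omega>. ?p \<omega> - 64 * incr \<omega>^4 \<partial>M) \<le> milstein_log_drift a s dt"
    unfolding integral_ln_factor[symmetric]
    by (intro integral_mono integrable_ln_factor int_q)
       (simp add: factor_eq ln_one_plus_ge_quartic[OF incr_ge])
  moreover have "dt^2 * (\<bar>W\<bar>/2 + \<bar>R3\<bar>/3 + 64 * \<bar>R4\<bar>)
      = \<bar>dt^2 * W\<bar>/2 + \<bar>dt^2 * R3\<bar>/3 + 64 * \<bar>dt^2 * R4\<bar>" for W R3 R4 :: real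
    by (simp add: abs_mult algebra_simps)
  ultimately show ?thesis
    unfolding E_q E_p abs_le_iff
    using abs_ge_self[of "dt^2 * milstein_mom2_coeff a s"] abs_ge_minus_self[of "dt^2 * milstein_mom2_coeff a s"]
      abs_ge_self[of "dt^2 * milstein_mom3_coeff a s dt"] abs_ge_minus_self[of "dt^2 * milstein_mom3_coeff a s dt"]
      abs_ge_self[of "dt^2 * milstein_mom4_coeff a s dt"]
    by simp
qed

lemma mgf_ln_factor:
  assumes \<theta>: "\<bar>\<theta>\<bar> \<le> 1"
  shows "integrable M (\<lambda>\<omega>. exp (\<theta> * ln (milstein_factor a s dt (X \<omega>))))"
    and "(\<integral>\<omega>. exp (\<theta> * ln (milstein_factor a s dt (X \<omega>))) \<partial>M)
      \<le> exp (\<theta> * milstein_log_drift a s dt + \<theta>^2 * milstein_mgf_coeff a s dt)"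
proof -
  let ?b = "\<lambda>\<omega>. 1 + \<theta> * ln (milstein_factor a s dt (X \<omega>)) + 8 * \<theta>^2 * (incr \<omega>^3 + 5 * incr \<omega>^2)"
  show int: "integrable M (\<lambda>\<omega>. exp (\<theta> * ln (milstein_factor a s dt (X \<omega>))))"
  proof (rule Bochner_Integration.integrable_bound)
    show "integrable M (\<lambda>\<omega>. incr \<omega> + 5)"
      using incr_moment1(1) by simp
    show "AE \<omega> in M. norm (exp (\<theta> * ln (milstein_factor a s dt (X \<omega>)))) \<le> norm (incr \<omega> + 5)"
    proof (rule AE_I2)
      fix \<omega>
      have "exp (\<theta> * ln (1 + incr \<omega>)) \<le> \<bar>incr \<omega> + 5\<bar>"
        using exp_mult_ln_one_plus_le_linear[OF incr_ge \<theta>, of \<omega>] by linarith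
      then show "norm (exp (\<theta> * ln (milstein_factor a s dt (X \<omega>)))) \<le> norm (incr \<omega> + 5)"
        by (simp add: factor_eq)
    qed
  qed simp
  have int_b: "integrable M ?b"
    using integrable_ln_factor incr_moment2(1) incr_moment3(1) by simp
  have "(\<integral>\<omega>. exp (\<theta> * ln (milstein_factor a s dt (X \<omega>))) \<partial>M) \<le> (\<integral>\<omega>. ?b \<omega> \<partial>M)"
    by (intro integral_mono int int_b)
       (simp add: factor_eq exp_mult_ln_one_plus_le_quadratic[OF incr_ge \<theta>])
  also have "(\<integral>\<omega>. ?b \<omega> \<partial>M) = 1 + (\<theta> * milstein_log_drift a s dt + \<theta>^2 * milstein_mgf_coeff a s dt)"
    using integrable_ln_factor incr_moment2 incr_moment3
    by (simp add: integral_ln_factor prob_space milstein_mgf_coeff_def algebra_simps)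
  also have "\<dots> \<le> exp (\<theta> * milstein_log_drift a s dt + \<theta>^2 * milstein_mgf_coeff a s dt)"
    by (rule exp_ge_add_one_self)
  finally show "(\<integral>\<omega>. exp (\<theta> * ln (milstein_factor a s dt (X \<omega>))) \<partial>M)
      \<le> exp (\<theta> * milstein_log_drift a s dt + \<theta>^2 * milstein_mgf_coeff a s dt)" .
qed

end

section \<open>Chernoff bounds for sums of independent random variables\<close>

lemma (in prob_space) prob_sum_ge_le_prod_mgf:
  fixes L :: "nat \<Rightarrow> 'a \<Rightarrow> real"
  assumes indep: "indep_vars (\<lambda>_. borel) L {..<n}"
    and int: "\<And>k. k < n \<Longrightarrow> integrable M (\<lambda>\<omega>. exp (\<theta> * L k \<omega>))"
  shows "prob {\<omega> \<in> space M. c \<le> \<theta> * (\<Sum>k<n. L k \<omega>)} \<le> (\<Prod>k<n. \<integral>\<omega>. exp (\<theta> * L k \<omega>) \<partial>M) / exp c"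
proof -
  have indep_exp: "indep_vars (\<lambda>_. borel) (\<lambda>k \<omega>. exp (\<theta> * L k \<omega>)) {..<n}"
    by (rule indep_vars_compose2[OF indep]) simp
  have "{\<omega> \<in> space M. c \<le> \<theta> * (\<Sum>k<n. L k \<omega>)} = {\<omega> \<in> space M. exp c \<le> (\<Prod>k<n. exp (\<theta> * L k \<omega>))}"
    by (simp add: exp_sum[symmetric] sum_distrib_left)
  also have "prob \<dots> \<le> (\<integral>\<omega>. (\<Prod>k<n. exp (\<theta> * L k \<omega>)) \<partial>M) / exp c"
    using indep_vars_integrable[OF _ indep_exp] int
    by (intro integral_Markov_inequality_measure[of _ _ "space M"] AE_I2 prod_nonneg) auto
  also have "(\<integral>\<omega>. (\<Prod>k<n. exp (\<theta> * L k \<omega>)) \<partial>M) = (\<Prod>k<n. \<integral>\<omega>. exp (\<theta> * L k \<omega>) \<partial>M)"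
    using indep_exp int by (intro indep_vars_lebesgue_integral) auto
  finally show ?thesis .
qed

lemma (in prob_space) prob_sum_deviation_le:
  fixes L :: "nat \<Rightarrow> 'a \<Rightarrow> real"
  assumes indep: "indep_vars (\<lambda>_. borel) L {..<n}"
    and int: "\<And>k \<theta>. \<bar>\<theta>\<bar> \<le> \<tau> \<Longrightarrow> integrable M (\<lambda>\<omega>. exp (\<theta> * L k \<omega>))"
    and mgf: "\<And>k \<theta>. \<bar>\<theta>\<bar> \<le> \<tau> \<Longrightarrow> (\<integral>\<omega>. exp (\<theta> * L k \<omega>) \<partial>M) \<le> exp (\<theta> * \<mu> + \<theta>^2 * V)"
    and \<tau>: "0 < \<tau>" and \<sigma>: "\<bar>\<sigma>\<bar> = 1"
  shows "prob {\<omega> \<in> space M. real n * \<delta> \<le> \<sigma> * ((\<Sum>k<n. L k \<omega>) - real n * \<mu>)}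
    \<le> exp (\<tau>^2 * V - \<tau> * \<delta>) ^ n"
proof -
  define \<theta> where "\<theta> = \<sigma> * \<tau>"
  have \<theta>: "\<bar>\<theta>\<bar> \<le> \<tau>"
    using \<sigma> \<tau> by (simp add: \<theta>_def abs_mult)
  have "\<sigma>^2 = 1"
    using power2_abs[of \<sigma>] \<sigma> by simp
  then have \<theta>_sq: "\<theta>^2 = \<tau>^2"
    by (simp add: \<theta>_def power_mult_distrib)
  have "real n * \<delta> \<le> \<sigma> * (S - real n * \<mu>) \<longleftrightarrow> real n * (\<tau> * \<delta> + \<theta> * \<mu>) \<le> \<theta> * S" for S
  proof -
    have "real n * \<delta> \<le> \<sigma> * (S - real n * \<mu>) \<longleftrightarrow> \<tau> * (real n * \<delta>) \<le> \<tau> * (\<sigma> * (S - real n * \<mu>))"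
      using \<tau> by simp
    also have "\<dots> \<longleftrightarrow> real n * (\<tau> * \<delta> + \<theta> * \<mu>) \<le> \<theta> * S"
      by (simp add: \<theta>_def algebra_simps)
    finally show ?thesis .
  qed
  then have "{\<omega> \<in> space M. real n * \<delta> \<le> \<sigma> * ((\<Sum>k<n. L k \<omega>) - real n * \<mu>)}
      = {\<omega> \<in> space M. real n * (\<tau> * \<delta> + \<theta> * \<mu>) \<le> \<theta> * (\<Sum>k<n. L k \<omega>)}"
    by simp
  also have "prob \<dots> \<le> (\<Prod>k<n. \<integral>\<omega>. exp (\<theta> * L k \<omega>) \<partial>M) / exp (real n * (\<tau> * \<delta> + \<theta> * \<mu>))"
    using indep int[OF \<theta>] by (rule prob_sum_ge_le_prod_mgf)
  also have "\<dots> \<le> (\<Prod>k<n. exp (\<theta> * \<mu> + \<theta>^2 * V)) / exp (real n * (\<tau> * \<delta> + \<theta> * \<mu>))"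
    using mgf[OF \<theta>] by (intro divide_right_mono prod_mono) auto
  also have "\<dots> = exp (real n * (\<theta> * \<mu> + \<theta>^2 * V)) / exp (real n * (\<tau> * \<delta> + \<theta> * \<mu>))"
    by (simp add: exp_of_nat_mult)
  also have "\<dots> = exp (real n * (\<tau>^2 * V - \<tau> * \<delta>))"
    by (subst exp_diff[symmetric]) (simp add: \<theta>_sq algebra_simps)
  also have "\<dots> = exp (\<tau>^2 * V - \<tau> * \<delta>) ^ n"
    by (rule exp_of_nat_mult)
  finally show ?thesis .
qed

lemma (in prob_space) AE_eventually_sum_deviation_lt:
  fixes L :: "nat \<Rightarrow> 'a \<Rightarrow> real"
  assumes meas: "\<And>k. L k \<in> borel_measurable M"
    and indep: "\<And>n. indep_vars (\<lambda>_. borel) L {..<n}"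
    and int: "\<And>k \<theta>. \<bar>\<theta>\<bar> \<le> \<tau> \<Longrightarrow> integrable M (\<lambda>\<omega>. exp (\<theta> * L k \<omega>))"
    and mgf: "\<And>k \<theta>. \<bar>\<theta>\<bar> \<le> \<tau> \<Longrightarrow> (\<integral>\<omega>. exp (\<theta> * L k \<omega>) \<partial>M) \<le> exp (\<theta> * \<mu> + \<theta>^2 * V)"
    and \<tau>: "0 < \<tau>" and \<delta>: "\<tau> * V < \<delta>"
  shows "AE \<omega> in M. \<forall>\<^sub>F n in sequentially. \<bar>(\<Sum>k<n. L k \<omega>) - real n * \<mu>\<bar> < real n * \<delta>"
proof -
  have one_sided: "AE \<omega> in M. \<forall>\<^sub>F n in sequentially. \<sigma> * ((\<Sum>k<n. L k \<omega>) - real n * \<mu>) < real n * \<delta>"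
    if \<sigma>: "\<bar>\<sigma>\<bar> = 1" for \<sigma>
  proof -
    define A where "A n = {\<omega> \<in> space M. real n * \<delta> \<le> \<sigma> * ((\<Sum>k<n. L k \<omega>) - real n * \<mu>)}" for n
    have A_sets: "A n \<in> sets M" for n
      unfolding A_def using meas by measurable
    have "exp (\<tau>^2 * V - \<tau> * \<delta>) < 1"
      using \<tau> \<delta> by (simp add: power2_eq_square algebra_simps)
    then have "summable (\<lambda>n. prob (A n))"
      unfolding A_def
      by (intro summable_comparison_test'[OF summable_geometric[of "exp (\<tau>^2 * V - \<tau> * \<delta>)"]])
         (auto intro: prob_sum_deviation_le indep int mgf \<tau> \<sigma>)
    then have "AE \<omega> in M. \<forall>\<^sub>F n in sequentially. \<omega> \<in> space M - A n"
      using A_sets emeasure_finite by (intro borel_cantelli_AE1) (auto simp: less_top[symmetric])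
    then show ?thesis
      by (rule AE_mp) (auto simp: A_def elim!: eventually_mono)
  qed
  have "AE \<omega> in M. \<forall>\<^sub>F n in sequentially. 1 * ((\<Sum>k<n. L k \<omega>) - real n * \<mu>) < real n * \<delta>"
    and "AE \<omega> in M. \<forall>\<^sub>F n in sequentially. -1 * ((\<Sum>k<n. L k \<omega>) - real n * \<mu>) < real n * \<delta>"
    by (rule one_sided, simp)+
  then show ?thesis
  proof eventually_elim
    case (elim \<omega>)
    from elim(1,2) show ?case
      by eventually_elim (simp add: abs_less_iff)
  qed
qed

section \<open>Exponential growth rates\<close>

lemma limsup_ereal_bounds:
  fixes f :: "nat \<Rightarrow> real"
  assumes "\<forall>\<^sub>F n in sequentially. \<bar>f n - c\<bar> \<le> e"
  shows "ereal (c - e) \<le> limsup (\<lambda>n. ereal (f n))" and "limsup (\<lambda>n. ereal (f n)) \<le> ereal (c + e)"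
proof -
  have "ereal (c - e) \<le> liminf (\<lambda>n. ereal (f n))"
    using assms by (intro Liminf_bounded) (auto elim!: eventually_mono)
  also have "\<dots> \<le> limsup (\<lambda>n. ereal (f n))"
    by (rule Liminf_le_Limsup) simp
  finally show "ereal (c - e) \<le> limsup (\<lambda>n. ereal (f n))" .
  show "limsup (\<lambda>n. ereal (f n)) \<le> ereal (c + e)"
    using assms by (intro Limsup_bounded) (auto elim!: eventually_mono)
qed

lemma limsup_ln_exp_rate_bounds:
  fixes S :: "nat \<Rightarrow> real"
  assumes r0: "0 < r0" and dt: "0 < dt" and e': "0 < e'"
    and dev: "\<forall>\<^sub>F n in sequentially. \<bar>S n - c * (real n * dt)\<bar> \<le> e * (real n * dt)"
  shows "ereal (c - (e + e')) \<le> limsup (\<lambda>n. ereal (ln (r0 * exp (S n)) / (real n * dt)))"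
    and "limsup (\<lambda>n. ereal (ln (r0 * exp (S n)) / (real n * dt))) \<le> ereal (c + (e + e'))"
proof -
  have "((\<lambda>n. ln r0 / dt / real n) \<longlongrightarrow> 0) sequentially"
    by (rule lim_const_over_n)
  then have "\<forall>\<^sub>F n in sequentially. \<bar>ln r0 / dt / real n\<bar> < e'"
    using e' by (auto dest: tendstoD simp: dist_real_def)
  with dev eventually_gt_at_top[of 0]
  have "\<forall>\<^sub>F n in sequentially. \<bar>ln (r0 * exp (S n)) / (real n * dt) - c\<bar> \<le> e + e'"
  proof eventually_elim
    case (elim n)
    then have ndt: "0 < real n * dt" using dt by simp
    have "ln (r0 * exp (S n)) = ln r0 + S n"
      using r0 by (simp add: ln_mult)
    then have eq: "ln (r0 * exp (S n)) / (real n * dt) - c = ln r0 / dt / real n + (S n - c * (real n * dt)) / (real n * dt)"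
      using dt elim(2) by (simp add: diff_divide_distrib add_divide_distrib)
    have "\<bar>(S n - c * (real n * dt)) / (real n * dt)\<bar> \<le> e"
      using elim(1) ndt by (simp add: abs_divide pos_divide_le_eq)
    moreover have "\<bar>x + y\<bar> \<le> e + e'" if "\<bar>y\<bar> \<le> e" "\<bar>x\<bar> < e'" for x y :: real
      using that by linarith
    ultimately show ?case
      unfolding eq using elim(3) by blast
  qed
  then show "ereal (c - (e + e')) \<le> limsup (\<lambda>n. ereal (ln (r0 * exp (S n)) / (real n * dt)))"
    and "limsup (\<lambda>n. ereal (ln (r0 * exp (S n)) / (real n * dt))) \<le> ereal (c + (e + e'))"
    by (rule limsup_ereal_bounds)+
qed

lemma eventually_rate_bounds:
  fixes S :: "nat \<Rightarrow> real"
  assumes "\<forall>\<^sub>F n in sequentially. \<bar>S n - c * (real n * dt)\<bar> \<le> e * (real n * dt)"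
  shows "\<forall>\<^sub>F n in sequentially. S n \<le> (c + e) * (real n * dt)"
    and "\<forall>\<^sub>F n in sequentially. (c - e) * (real n * dt) \<le> S n"
  using assms by (auto elim!: eventually_mono simp: abs_le_iff algebra_simps)

lemma ms_exp_stable_if_rate:
  assumes r0: "0 < r0" and rho: "\<And>n. sqrt (\<integral>\<omega>. (rho n \<omega>)\<^sup>2 \<partial>M) = r0 * exp (S n)"
    and dev: "\<forall>\<^sub>F n in sequentially. \<bar>S n - c * (real n * dt)\<bar> \<le> e * (real n * dt)"
    and neg: "c + e < 0"
  shows "ms_exp_stable M rho dt"
  unfolding ms_exp_stable_def
proof (intro exI conjI)
  show "0 < r0" "0 < - (c + e)" using r0 neg by simp_all
  show "\<forall>\<^sub>F n in sequentially. sqrt (\<integral>\<omega>. (rho n \<omega>)\<^sup>2 \<partial>M) \<le> r0 * exp (- (- (c + e)) * (real n * dt))"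
    using eventually_rate_bounds(1)[OF dev] r0 by (simp add: rho ac_simps)
qed

lemma ms_exp_blowup_if_rate:
  assumes r0: "0 < r0" and rho: "\<And>n. sqrt (\<integral>\<omega>. (rho n \<omega>)\<^sup>2 \<partial>M) = r0 * exp (S n)"
    and dev: "\<forall>\<^sub>F n in sequentially. \<bar>S n - c * (real n * dt)\<bar> \<le> e * (real n * dt)"
    and pos: "0 < c - e"
  shows "ms_exp_blowup M rho dt"
  unfolding ms_exp_blowup_def
proof (intro exI conjI)
  show "0 < r0" "0 < c - e" using r0 pos by simp_all
  show "\<forall>\<^sub>F n in sequentially. r0 * exp ((c - e) * (real n * dt)) \<le> sqrt (\<integral>\<omega>. (rho n \<omega>)\<^sup>2 \<partial>M)"
    using eventually_rate_bounds(2)[OF dev] r0 by (simp add: rho ac_simps)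
qed

lemma as_exp_stable_if_rate:
  assumes r0: "0 < r0" and rho: "\<And>n \<omega>. \<bar>rho n \<omega>\<bar> = r0 * exp (S n \<omega>)"
    and dev: "AE \<omega> in M. \<forall>\<^sub>F n in sequentially. \<bar>S n \<omega> - c * (real n * dt)\<bar> \<le> e * (real n * dt)"
    and neg: "c + e < 0"
  shows "as_exp_stable M rho dt"
  unfolding as_exp_stable_def
proof (intro exI conjI)
  show "0 < - (c + e)" using neg by simp
  show "AE \<omega> in M. \<exists>C>0. \<forall>\<^sub>F n in sequentially. \<bar>rho n \<omega>\<bar> \<le> C * exp (- (- (c + e)) * (real n * dt))"
    using dev
  proof (rule eventually_mono)
    fix \<omega> assume "\<forall>\<^sub>F n in sequentially. \<bar>S n \<omega> - c * (real n * dt)\<bar> \<le> e * (real n * dt)"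
    from eventually_rate_bounds(1)[OF this] r0
    show "\<exists>C>0. \<forall>\<^sub>F n in sequentially. \<bar>rho n \<omega>\<bar> \<le> C * exp (- (- (c + e)) * (real n * dt))"
      by (intro exI[of _ r0]) (simp add: rho ac_simps)
  qed
qed

lemma as_exp_blowup_if_rate:
  assumes r0: "0 < r0" and rho: "\<And>n \<omega>. \<bar>rho n \<omega>\<bar> = r0 * exp (S n \<omega>)"
    and dev: "AE \<omega> in M. \<forall>\<^sub>F n in sequentially. \<bar>S n \<omega> - c * (real n * dt)\<bar> \<le> e * (real n * dt)"
    and pos: "0 < c - e"
  shows "as_exp_blowup M rho dt"
  unfolding as_exp_blowup_def
proof (intro exI conjI)
  show "0 < c - e" using pos by simp
  show "AE \<omega> in M. \<exists>C>0. \<forall>\<^sub>F n in sequentially. C * exp ((c - e) * (real n * dt)) \<le> \<bar>rho n \<omega>\<bar>"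
    using dev
  proof (rule eventually_mono)
    fix \<omega> assume "\<forall>\<^sub>F n in sequentially. \<bar>S n \<omega> - c * (real n * dt)\<bar> \<le> e * (real n * dt)"
    from eventually_rate_bounds(2)[OF this] r0
    show "\<exists>C>0. \<forall>\<^sub>F n in sequentially. C * exp ((c - e) * (real n * dt)) \<le> \<bar>rho n \<omega>\<bar>"
      by (intro exI[of _ r0]) (simp add: rho ac_simps)
  qed
qed

section \<open>The scheme driven by a Brownian motion\<close>

definition bm_increment :: "(real \<Rightarrow> 'a \<Rightarrow> real) \<Rightarrow> real \<Rightarrow> nat \<Rightarrow> 'a \<Rightarrow> real" where
  "bm_increment B dt k \<omega> = B (real (Suc k) * dt) \<omega> - B (real k * dt) \<omega>"

lemma milstein_rho_eq_prod:
  "milstein_rho lam eps sig x0 y0 B dt n \<omega> = sqrt (x0\<^sup>2 + y0\<^sup>2) *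
     (\<Prod>k<n. milstein_factor (lam + eps\<^sup>2 / 2 - sig\<^sup>2 / 2) sig dt (bm_increment B dt k \<omega>))"
  by (induction n) (simp_all add: milstein_factor_def bm_increment_def)

locale milstein_scheme =
  fixes M :: "'a measure" and B :: "real \<Rightarrow> 'a \<Rightarrow> real" and dt a s r0 :: real
  assumes brownian: "brownian_motion M B"
    and dt_pos: "0 < dt" and dt_le_1: "dt \<le> 1"
    and drift_small: "\<bar>a\<bar> * dt \<le> 1/4"
    and r0_pos: "0 < r0"
begin

sublocale prob_space M
  using brownian by (simp add: brownian_motion_def)

lemma bm_increment_normal: "distributed M lborel (bm_increment B dt k) (normal_density 0 (sqrt dt))"
proof -
  have "distributed M lborel (\<lambda>\<omega>. B (real (Suc k) * dt) \<omega> - B (real k * dt) \<omega>)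
      (normal_density 0 (sqrt (real (Suc k) * dt - real k * dt)))"
    using brownian dt_pos unfolding brownian_motion_def by simp
  then show ?thesis
    by (simp add: bm_increment_def[abs_def] algebra_simps)
qed

lemma indep_bm_increments: "indep_vars (\<lambda>_. borel) (bm_increment B dt) {..<n}"
  using brownian dt_pos unfolding brownian_motion_def bm_increment_def[abs_def]
  by (auto elim!: allE[of _ n] allE[of _ "\<lambda>i. real i * dt"])

(* s occurs in no assumption of milstein_step, so it is not an argument of the locale predicate. *)
lemma milstein_step_increment: "milstein_step M (bm_increment B dt k) dt a"
  by unfold_locales (use bm_increment_normal dt_pos drift_small in auto)

definition rho :: "nat \<Rightarrow> 'a \<Rightarrow> real" where
  "rho n \<omega> = r0 * (\<Prod>k<n. milstein_factor a s dt (bm_increment B dt k \<omega>))"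

definition log_sum :: "nat \<Rightarrow> 'a \<Rightarrow> real" where
  "log_sum n \<omega> = (\<Sum>k<n. ln (milstein_factor a s dt (bm_increment B dt k \<omega>)))"

lemma abs_rho_eq_exp: "\<bar>rho n \<omega>\<bar> = r0 * exp (log_sum n \<omega>)"
proof -
  have pos: "0 < milstein_factor a s dt x" for x
    using milstein_factor_ge_quarter[OF drift_small less_imp_le[OF dt_pos], of s x] by linarith
  then show ?thesis
    using r0_pos by (simp add: rho_def log_sum_def exp_sum abs_mult abs_prod abs_of_pos)
qed

lemma sqrt_integral_rho_sq:
  "sqrt (\<integral>\<omega>. (rho n \<omega>)\<^sup>2 \<partial>M) = r0 * exp (real n * ln (milstein_ms_factor a s dt) / 2)"
proof -
  interpret step: milstein_step M "bm_increment B dt 0" dt a s by (rule milstein_step_increment)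
  have indep: "indep_vars (\<lambda>_. borel) (\<lambda>k \<omega>. (milstein_factor a s dt (bm_increment B dt k \<omega>))^2) {..<n}"
    by (rule indep_vars_compose2[OF indep_bm_increments]) simp
  have "(\<integral>\<omega>. (rho n \<omega>)\<^sup>2 \<partial>M) = r0^2 * (\<integral>\<omega>. (\<Prod>k<n. (milstein_factor a s dt (bm_increment B dt k \<omega>))^2) \<partial>M)"
    by (simp add: rho_def power_mult_distrib prod_power_distrib)
  also have "\<dots> = r0^2 * (\<Prod>k<n. \<integral>\<omega>. (milstein_factor a s dt (bm_increment B dt k \<omega>))^2 \<partial>M)"
    using indep milstein_step.integral_factor_sq(1)[OF milstein_step_increment]
    by (simp add: indep_vars_lebesgue_integral)
  also have "\<dots> = r0^2 * milstein_ms_factor a s dt ^ n"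
    by (simp add: milstein_step.integral_factor_sq(2)[OF milstein_step_increment])
  finally have "(\<integral>\<omega>. (rho n \<omega>)\<^sup>2 \<partial>M) = r0^2 * milstein_ms_factor a s dt ^ n" .
  moreover have "sqrt (milstein_ms_factor a s dt) ^ n = exp (real n * ln (milstein_ms_factor a s dt) / 2)"
  proof -
    have "sqrt (milstein_ms_factor a s dt) = exp (ln (milstein_ms_factor a s dt) / 2)"
      using step.ms_factor_pos by (simp add: ln_sqrt[symmetric])
    then show ?thesis
      by (simp add: exp_of_nat_mult[symmetric])
  qed
  ultimately show ?thesis
    using r0_pos by (simp add: real_sqrt_mult real_sqrt_power)
qed

lemma dt_sq_le: "dt^2 \<le> dt"
  using dt_pos dt_le_1 by (simp add: power2_eq_square mult_left_le_one_le)

lemma dt_le_sqrt: "dt \<le> sqrt dt"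
  using dt_sq_le by (rule real_le_rsqrt)

lemma ms_log_rate:
  assumes small: "dt * (2 * \<bar>a + s^2\<bar> + \<bar>milstein_mom2_coeff a s\<bar>) \<le> 1/2"
  shows "\<bar>real n * ln (milstein_ms_factor a s dt) / 2 - (a + s^2) * (real n * dt)\<bar>
    \<le> ((2 * \<bar>a + s^2\<bar> + \<bar>milstein_mom2_coeff a s\<bar>)^2 + \<bar>milstein_mom2_coeff a s\<bar>) * dt * (real n * dt)"
proof -
  have "real n * ln (milstein_ms_factor a s dt) / 2 - (a + s^2) * (real n * dt)
      = real n * dt * (ln (milstein_ms_factor a s dt) / (2 * dt) - (a + s^2))"
    using dt_pos by (simp add: field_simps)
  moreover have "\<bar>ln (milstein_ms_factor a s dt) / (2 * dt) - (a + s^2)\<bar>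
      \<le> ((2 * \<bar>a + s^2\<bar> + \<bar>milstein_mom2_coeff a s\<bar>)^2 + \<bar>milstein_mom2_coeff a s\<bar>) * dt"
    unfolding milstein_ms_factor_def using dt_pos dt_le_1 small by (rule ln_one_plus_quadratic_rate)
  ultimately show ?thesis
    using dt_pos by (simp add: abs_mult mult_left_mono mult.commute)
qed

lemma log_drift_near_drift:
  assumes K3: "\<bar>milstein_mom3_coeff a s dt\<bar> \<le> K3" and K4: "\<bar>milstein_mom4_coeff a s dt\<bar> \<le> K4"
  shows "\<bar>milstein_log_drift a s dt - a * dt\<bar>
    \<le> (\<bar>milstein_mom2_coeff a s\<bar>/2 + K3/3 + 64 * K4) * sqrt dt * dt"
proof -
  interpret step: milstein_step M "bm_increment B dt 0" dt a s by (rule milstein_step_increment)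
  have dt_le: "dt^2 \<le> sqrt dt * dt"
    unfolding power2_eq_square using dt_le_sqrt dt_pos by (intro mult_right_mono) auto
  have "\<bar>milstein_log_drift a s dt - a * dt\<bar>
      \<le> dt^2 * (\<bar>milstein_mom2_coeff a s\<bar>/2 + \<bar>milstein_mom3_coeff a s dt\<bar>/3 + 64 * \<bar>milstein_mom4_coeff a s dt\<bar>)"
    by (rule step.log_drift_bound)
  also have "\<dots> \<le> dt^2 * (\<bar>milstein_mom2_coeff a s\<bar>/2 + K3/3 + 64 * K4)"
    using K3 K4 by (intro mult_left_mono) auto
  also have "\<dots> \<le> sqrt dt * dt * (\<bar>milstein_mom2_coeff a s\<bar>/2 + K3/3 + 64 * K4)"
    using K3 K4 dt_le by (intro mult_right_mono) auto
  finally show ?thesis by (simp add: ac_simps)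
qed

lemma mgf_coeff_le:
  assumes K3: "\<bar>milstein_mom3_coeff a s dt\<bar> \<le> K3"
  shows "milstein_mgf_coeff a s dt \<le> 8 * dt * (K3 + 5 * s^2 + 5 * \<bar>milstein_mom2_coeff a s\<bar>)"
proof -
  have sq_le: "dt^2 * c \<le> dt * \<bar>c\<bar>" for c
  proof -
    have "dt^2 * c \<le> dt^2 * \<bar>c\<bar>" by (intro mult_left_mono) auto
    also have "\<dots> \<le> dt * \<bar>c\<bar>" using dt_sq_le by (intro mult_right_mono) auto
    finally show ?thesis .
  qed
  have "dt * \<bar>milstein_mom3_coeff a s dt\<bar> \<le> dt * K3"
    using K3 dt_pos by (intro mult_left_mono) auto
  then have "dt^2 * milstein_mom3_coeff a s dt \<le> dt * K3"
    using sq_le[of "milstein_mom3_coeff a s dt"] by linarith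
  moreover have "milstein_mgf_coeff a s dt
      = 8 * (dt^2 * milstein_mom3_coeff a s dt) + 40 * (s^2 * dt) + 40 * (dt^2 * milstein_mom2_coeff a s)"
    unfolding milstein_mgf_coeff_def by (simp add: algebra_simps)
  moreover have "8 * dt * (K3 + 5 * s^2 + 5 * \<bar>milstein_mom2_coeff a s\<bar>)
      = 8 * (dt * K3) + 40 * (s^2 * dt) + 40 * (dt * \<bar>milstein_mom2_coeff a s\<bar>)"
    by (simp add: algebra_simps)
  ultimately show ?thesis
    using sq_le[of "milstein_mom2_coeff a s"] by linarith
qed

lemma AE_log_sum_near_mean:
  assumes K3: "\<bar>milstein_mom3_coeff a s dt\<bar> \<le> K3"
  shows "AE \<omega> in M. \<forall>\<^sub>F n in sequentially.
    \<bar>log_sum n \<omega> - real n * milstein_log_drift a s dt\<bar> < real n * (dt * sqrt dt)"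
proof -
  define K where "K = K3 + 5 * s^2 + 5 * \<bar>milstein_mom2_coeff a s\<bar> + 1"
  \<comment> \<open>Chosen so that \<tau> times the quadratic coefficient of the mgf bound is at most half of
    the admissible deviation dt * sqrt dt.\<close>
  define \<tau> where "\<tau> = sqrt dt / (16 * K)"
  have K: "1 \<le> K"
    unfolding K_def using K3 by simp
  have "sqrt dt \<le> 16 * K"
    using K dt_le_1 real_sqrt_le_1_iff[of dt] by linarith
  then have \<tau>: "0 < \<tau>" "\<tau> \<le> 1"
    unfolding \<tau>_def using K dt_pos by (simp_all add: field_simps)
  have "milstein_mgf_coeff a s dt \<le> 8 * dt * K"
    using mgf_coeff_le[OF K3] dt_pos unfolding K_def by (simp add: algebra_simps)
  then have "\<tau> * milstein_mgf_coeff a s dt \<le> \<tau> * (8 * dt * K)"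
    using \<tau> by (intro mult_left_mono) auto
  also have "\<dots> = dt * sqrt dt / 2"
    unfolding \<tau>_def using K by (simp add: field_simps)
  also have "\<dots> < dt * sqrt dt"
    using dt_pos by simp
  finally have \<tau>V: "\<tau> * milstein_mgf_coeff a s dt < dt * sqrt dt" .
  let ?L = "\<lambda>k \<omega>. ln (milstein_factor a s dt (bm_increment B dt k \<omega>))"
  have "AE \<omega> in M. \<forall>\<^sub>F n in sequentially. \<bar>(\<Sum>k<n. ?L k \<omega>) - real n * milstein_log_drift a s dt\<bar> < real n * (dt * sqrt dt)"
  proof (rule AE_eventually_sum_deviation_lt[OF _ _ _ _ \<tau>(1) \<tau>V])
    show "?L k \<in> borel_measurable M" for k
      using milstein_step.X_measurable[OF milstein_step_increment] by measurable
    show "indep_vars (\<lambda>_. borel) ?L {..<n}" for n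
      by (rule indep_vars_compose2[OF indep_bm_increments]) simp
    show "integrable M (\<lambda>\<omega>. exp (\<theta> * ?L k \<omega>))" if "\<bar>\<theta>\<bar> \<le> \<tau>" for k \<theta>
      using that \<tau> by (intro milstein_step.mgf_ln_factor(1)[OF milstein_step_increment]) simp
    show "(\<integral>\<omega>. exp (\<theta> * ?L k \<omega>) \<partial>M)
        \<le> exp (\<theta> * milstein_log_drift a s dt + \<theta>^2 * milstein_mgf_coeff a s dt)"
      if "\<bar>\<theta>\<bar> \<le> \<tau>" for k \<theta>
      using that \<tau> by (intro milstein_step.mgf_ln_factor(2)[OF milstein_step_increment]) simp
  qed
  then show ?thesis
    unfolding log_sum_def .
qed

lemma AE_log_sum_rate:
  assumes K3: "\<bar>milstein_mom3_coeff a s dt\<bar> \<le> K3" and K4: "\<bar>milstein_mom4_coeff a s dt\<bar> \<le> K4"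
  shows "AE \<omega> in M. \<forall>\<^sub>F n in sequentially. \<bar>log_sum n \<omega> - a * (real n * dt)\<bar>
    \<le> ((\<bar>milstein_mom2_coeff a s\<bar>/2 + K3/3 + 64 * K4 + 1) * sqrt dt) * (real n * dt)"
  using AE_log_sum_near_mean[OF K3]
proof (rule eventually_mono, elim eventually_mono)
  fix \<omega> n
  let ?\<mu> = "milstein_log_drift a s dt" and ?K = "\<bar>milstein_mom2_coeff a s\<bar>/2 + K3/3 + 64 * K4"
  assume near: "\<bar>log_sum n \<omega> - real n * ?\<mu>\<bar> < real n * (dt * sqrt dt)"
  have "real n * \<bar>?\<mu> - a * dt\<bar> \<le> real n * (?K * sqrt dt * dt)"
    using log_drift_near_drift[OF K3 K4] by (intro mult_left_mono) auto
  moreover have "log_sum n \<omega> - a * (real n * dt) = (log_sum n \<omega> - real n * ?\<mu>) + real n * (?\<mu> - a * dt)"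
    by (simp add: algebra_simps)
  then have "\<bar>log_sum n \<omega> - a * (real n * dt)\<bar> \<le> \<bar>log_sum n \<omega> - real n * ?\<mu>\<bar> + real n * \<bar>?\<mu> - a * dt\<bar>"
    using abs_triangle_ineq[of "log_sum n \<omega> - real n * ?\<mu>" "real n * (?\<mu> - a * dt)"]
    by (simp add: abs_mult)
  ultimately show "\<bar>log_sum n \<omega> - a * (real n * dt)\<bar> \<le> ((?K + 1) * sqrt dt) * (real n * dt)"
    using near by (simp add: algebra_simps)
qed

lemma ms_exponent_bounds:
  assumes small: "dt * (2 * \<bar>a + s^2\<bar> + \<bar>milstein_mom2_coeff a s\<bar>) \<le> 1/2"
    and C1: "(2 * \<bar>a + s^2\<bar> + \<bar>milstein_mom2_coeff a s\<bar>)^2 + \<bar>milstein_mom2_coeff a s\<bar> + 1 \<le> C1"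
    and gap: "a + s^2 \<noteq> 0 \<Longrightarrow> C1 * dt < \<bar>a + s^2\<bar>"
  shows "ereal (a + s^2 - C1 * dt)
      \<le> limsup (\<lambda>n. ereal (ln (sqrt (\<integral>\<omega>. (rho n \<omega>)\<^sup>2 \<partial>M)) / (real n * dt)))"
    and "limsup (\<lambda>n. ereal (ln (sqrt (\<integral>\<omega>. (rho n \<omega>)\<^sup>2 \<partial>M)) / (real n * dt)))
      \<le> ereal (a + s^2 + C1 * dt)"
    and "a + s^2 < 0 \<Longrightarrow> ms_exp_stable M rho dt"
    and "0 < a + s^2 \<Longrightarrow> ms_exp_blowup M rho dt"
proof -
  define C0 where "C0 = (2 * \<bar>a + s^2\<bar> + \<bar>milstein_mom2_coeff a s\<bar>)^2 + \<bar>milstein_mom2_coeff a s\<bar>"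
  define S where "S n = real n * ln (milstein_ms_factor a s dt) / 2" for n
  have rho: "sqrt (\<integral>\<omega>. (rho n \<omega>)\<^sup>2 \<partial>M) = r0 * exp (S n)" for n
    unfolding S_def by (rule sqrt_integral_rho_sq)
  have dev: "\<forall>\<^sub>F n in sequentially. \<bar>S n - (a + s^2) * (real n * dt)\<bar> \<le> (C0 * dt) * (real n * dt)"
    unfolding S_def C0_def using ms_log_rate[OF small] by simp
  have e': "0 < (C1 - C0) * dt"
    using C1 dt_pos by (simp add: C0_def)
  have C0_C1: "C0 * dt + (C1 - C0) * dt = C1 * dt"
    by (simp add: algebra_simps)
  show "ereal (a + s^2 - C1 * dt)
      \<le> limsup (\<lambda>n. ereal (ln (sqrt (\<integral>\<omega>. (rho n \<omega>)\<^sup>2 \<partial>M)) / (real n * dt)))"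
    using limsup_ln_exp_rate_bounds(1)[OF r0_pos dt_pos e' dev] by (simp add: rho C0_C1)
  show "limsup (\<lambda>n. ereal (ln (sqrt (\<integral>\<omega>. (rho n \<omega>)\<^sup>2 \<partial>M)) / (real n * dt)))
      \<le> ereal (a + s^2 + C1 * dt)"
    using limsup_ln_exp_rate_bounds(2)[OF r0_pos dt_pos e' dev] by (simp add: rho C0_C1)
  have "C0 * dt < \<bar>a + s^2\<bar>" if "a + s^2 \<noteq> 0"
    using gap[OF that] e' C0_C1 by linarith
  then show "a + s^2 < 0 \<Longrightarrow> ms_exp_stable M rho dt"
    and "0 < a + s^2 \<Longrightarrow> ms_exp_blowup M rho dt"
    by (auto intro: ms_exp_stable_if_rate[OF r0_pos rho dev] ms_exp_blowup_if_rate[OF r0_pos rho dev])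
qed

lemma as_exponent_bounds:
  assumes K3: "\<bar>milstein_mom3_coeff a s dt\<bar> \<le> K3" and K4: "\<bar>milstein_mom4_coeff a s dt\<bar> \<le> K4"
    and C2: "\<bar>milstein_mom2_coeff a s\<bar>/2 + K3/3 + 64 * K4 + 2 \<le> C2"
    and gap: "a \<noteq> 0 \<Longrightarrow> C2 * sqrt dt < \<bar>a\<bar>"
  shows "AE \<omega> in M. ereal (a - C2 * sqrt dt) \<le> limsup (\<lambda>n. ereal (ln \<bar>rho n \<omega>\<bar> / (real n * dt)))
      \<and> limsup (\<lambda>n. ereal (ln \<bar>rho n \<omega>\<bar> / (real n * dt))) \<le> ereal (a + C2 * sqrt dt)"
    and "a < 0 \<Longrightarrow> as_exp_stable M rho dt"
    and "0 < a \<Longrightarrow> as_exp_blowup M rho dt"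
proof -
  define K where "K = \<bar>milstein_mom2_coeff a s\<bar>/2 + K3/3 + 64 * K4 + 1"
  have dev: "AE \<omega> in M. \<forall>\<^sub>F n in sequentially. \<bar>log_sum n \<omega> - a * (real n * dt)\<bar> \<le> (K * sqrt dt) * (real n * dt)"
    unfolding K_def by (rule AE_log_sum_rate[OF K3 K4])
  have e': "0 < (C2 - K) * sqrt dt"
    using C2 dt_pos by (simp add: K_def)
  have K_C2: "K * sqrt dt + (C2 - K) * sqrt dt = C2 * sqrt dt"
    by (simp add: algebra_simps)
  show "AE \<omega> in M. ereal (a - C2 * sqrt dt) \<le> limsup (\<lambda>n. ereal (ln \<bar>rho n \<omega>\<bar> / (real n * dt)))
      \<and> limsup (\<lambda>n. ereal (ln \<bar>rho n \<omega>\<bar> / (real n * dt))) \<le> ereal (a + C2 * sqrt dt)"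
    using dev
  proof (rule eventually_mono)
    fix \<omega>
    assume "\<forall>\<^sub>F n in sequentially. \<bar>log_sum n \<omega> - a * (real n * dt)\<bar> \<le> (K * sqrt dt) * (real n * dt)"
    from limsup_ln_exp_rate_bounds[OF r0_pos dt_pos e' this]
    show "ereal (a - C2 * sqrt dt) \<le> limsup (\<lambda>n. ereal (ln \<bar>rho n \<omega>\<bar> / (real n * dt)))
      \<and> limsup (\<lambda>n. ereal (ln \<bar>rho n \<omega>\<bar> / (real n * dt))) \<le> ereal (a + C2 * sqrt dt)"
      by (simp add: abs_rho_eq_exp K_C2)
  qed
  have "K * sqrt dt < \<bar>a\<bar>" if "a \<noteq> 0"
    using gap[OF that] e' K_C2 by linarith
  then show "a < 0 \<Longrightarrow> as_exp_stable M rho dt"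
    and "0 < a \<Longrightarrow> as_exp_blowup M rho dt"
    by (auto intro: as_exp_stable_if_rate[OF r0_pos abs_rho_eq_exp dev] as_exp_blowup_if_rate[OF r0_pos abs_rho_eq_exp dev])
qed

end

lemma eventually_small_step_conditions:
  fixes a s C1 C2 :: real
  shows "\<forall>\<^sub>F dt in at_right 0. dt < 1/2 \<and> \<bar>a\<bar> * dt \<le> 1/4
    \<and> dt * (2 * \<bar>a + s^2\<bar> + \<bar>milstein_mom2_coeff a s\<bar>) \<le> 1/2
    \<and> \<bar>milstein_mom3_coeff a s dt\<bar> \<le> \<bar>milstein_mom3_coeff a s 0\<bar> + 1
    \<and> \<bar>milstein_mom4_coeff a s dt\<bar> \<le> \<bar>milstein_mom4_coeff a s 0\<bar> + 1
    \<and> (a + s^2 \<noteq> 0 \<longrightarrow> C1 * dt < \<bar>a + s^2\<bar>)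
    \<and> (a \<noteq> 0 \<longrightarrow> C2 * sqrt dt < \<bar>a\<bar>)"
proof -
  have lin: "((\<lambda>dt. C * dt) \<longlongrightarrow> 0) (at_right 0)" for C :: real
    by (auto intro!: tendsto_eq_intros)
  have sqr: "((\<lambda>dt. C * sqrt dt) \<longlongrightarrow> 0) (at_right 0)" for C :: real
    by (auto intro!: tendsto_eq_intros)
  have gap: "\<forall>\<^sub>F dt in at_right 0. c \<noteq> 0 \<longrightarrow> f dt < \<bar>c\<bar>"
    if "(f \<longlongrightarrow> 0) (at_right 0)" for f :: "real \<Rightarrow> real" and c :: real
    by (cases "c = 0") (auto intro: order_tendstoD(2)[OF that])
  have mom3: "((\<lambda>dt. \<bar>milstein_mom3_coeff a s dt\<bar>) \<longlongrightarrow> \<bar>milstein_mom3_coeff a s 0\<bar>) (at_right 0)"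
    unfolding milstein_mom3_coeff_def by (intro tendsto_intros)
  have mom4: "((\<lambda>dt. \<bar>milstein_mom4_coeff a s dt\<bar>) \<longlongrightarrow> \<bar>milstein_mom4_coeff a s 0\<bar>) (at_right 0)"
    unfolding milstein_mom4_coeff_def by (intro tendsto_intros)
  have "\<forall>\<^sub>F dt in at_right 0. dt < (1/2 :: real)"
    by (rule order_tendstoD(2)[OF tendsto_ident_at]) simp
  moreover have "\<forall>\<^sub>F dt in at_right 0. \<bar>a\<bar> * dt < 1/4"
    by (rule order_tendstoD(2)[OF lin]) simp
  moreover have "\<forall>\<^sub>F dt in at_right 0. (2 * \<bar>a + s^2\<bar> + \<bar>milstein_mom2_coeff a s\<bar>) * dt < 1/2"
    by (rule order_tendstoD(2)[OF lin]) simp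
  moreover have "\<forall>\<^sub>F dt in at_right 0. \<bar>milstein_mom3_coeff a s dt\<bar> < \<bar>milstein_mom3_coeff a s 0\<bar> + 1"
    by (rule order_tendstoD(2)[OF mom3]) simp
  moreover have "\<forall>\<^sub>F dt in at_right 0. \<bar>milstein_mom4_coeff a s dt\<bar> < \<bar>milstein_mom4_coeff a s 0\<bar> + 1"
    by (rule order_tendstoD(2)[OF mom4]) simp
  moreover have "\<forall>\<^sub>F dt in at_right 0. a + s^2 \<noteq> 0 \<longrightarrow> C1 * dt < \<bar>a + s^2\<bar>"
    by (rule gap[OF lin])
  moreover have "\<forall>\<^sub>F dt in at_right 0. a \<noteq> 0 \<longrightarrow> C2 * sqrt dt < \<bar>a\<bar>"
    by (rule gap[OF sqr])
  ultimately show ?thesis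
    by eventually_elim (auto simp: mult.commute)
qed

theorem theorem1p1:
  fixes lam eps sig x0 y0 :: real
    and M :: "'a measure" and B :: "real \<Rightarrow> 'a \<Rightarrow> real"
  assumes "(x0, y0) \<noteq> (0, 0)"
    and "brownian_motion M B"
  shows "\<exists>dt1 C1 C2. 0 < dt1 \<and> dt1 < 1 \<and> C1 > 0 \<and> C2 > 0 \<and>
    (\<forall>dt. 0 < dt \<and> dt < dt1 \<longrightarrow>
      (let rho = milstein_rho lam eps sig x0 y0 B dt;
           ms = lam + eps\<^sup>2 / 2 + sig\<^sup>2 / 2;
           as = lam + eps\<^sup>2 / 2 - sig\<^sup>2 / 2
       in ereal (ms - C1 * dt)
            \<le> limsup (\<lambda>n. ereal (ln (sqrt (integral\<^sup>L M (\<lambda>\<omega>. (rho n \<omega>)\<^sup>2))) / (real n * dt)))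
        \<and> limsup (\<lambda>n. ereal (ln (sqrt (integral\<^sup>L M (\<lambda>\<omega>. (rho n \<omega>)\<^sup>2))) / (real n * dt)))
            \<le> ereal (ms + C1 * dt)
        \<and> (AE \<omega> in M.
             ereal (as - C2 * sqrt dt) \<le> limsup (\<lambda>n. ereal (ln \<bar>rho n \<omega>\<bar> / (real n * dt)))
           \<and> limsup (\<lambda>n. ereal (ln \<bar>rho n \<omega>\<bar> / (real n * dt))) \<le> ereal (as + C2 * sqrt dt))
        \<and> (ms < 0 \<longrightarrow> ms_exp_stable M rho dt)
        \<and> (ms > 0 \<longrightarrow> ms_exp_blowup M rho dt)
        \<and> (as < 0 \<longrightarrow> as_exp_stable M rho dt)
        \<and> (as > 0 \<longrightarrow> as_exp_blowup M rho dt)))"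
proof -
  define a where "a = lam + eps\<^sup>2 / 2 - sig\<^sup>2 / 2"
  define r0 where "r0 = sqrt (x0\<^sup>2 + y0\<^sup>2)"
  define W K3 K4 where "W = \<bar>milstein_mom2_coeff a sig\<bar>"
    and "K3 = \<bar>milstein_mom3_coeff a sig 0\<bar> + 1" and "K4 = \<bar>milstein_mom4_coeff a sig 0\<bar> + 1"
  define C1 C2 where "C1 = (2 * \<bar>a + sig^2\<bar> + W)^2 + W + 1" and "C2 = W/2 + K3/3 + 64 * K4 + 2"
  have r0: "0 < r0"
    using assms(1) by (simp add: r0_def sum_power2_gt_zero_iff)
  obtain dt1 where dt1: "0 < dt1" and small: "\<And>dt. 0 < dt \<Longrightarrow> dt < dt1 \<Longrightarrow>
      dt < 1/2 \<and> \<bar>a\<bar> * dt \<le> 1/4 \<and> dt * (2 * \<bar>a + sig^2\<bar> + W) \<le> 1/2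
    \<and> \<bar>milstein_mom3_coeff a sig dt\<bar> \<le> K3 \<and> \<bar>milstein_mom4_coeff a sig dt\<bar> \<le> K4
    \<and> (a + sig^2 \<noteq> 0 \<longrightarrow> C1 * dt < \<bar>a + sig^2\<bar>) \<and> (a \<noteq> 0 \<longrightarrow> C2 * sqrt dt < \<bar>a\<bar>)"
    using eventually_small_step_conditions[of a sig C1 C2]
    unfolding eventually_at_right_field W_def K3_def K4_def by auto
  show ?thesis
  proof (rule exI[of _ "min dt1 (1/2)"], rule exI[of _ C1], rule exI[of _ C2], intro conjI allI impI,
      goal_cases)
    case 1 show ?case using dt1 by simp
  next
    case 2 show ?case by simp
  next
    case 3 show ?case unfolding C1_def W_def by (intro add_nonneg_pos add_nonneg_nonneg) simp_all
  next
    case 4 show ?case unfolding C2_def W_def K3_def K4_def by (intro add_nonneg_pos add_nonneg_nonneg) simp_all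
  next
    case (5 dt)
    then have dt: "0 < dt" "dt < 1/2" and drift: "\<bar>a\<bar> * dt \<le> 1/4"
      and ms_small: "dt * (2 * \<bar>a + sig^2\<bar> + \<bar>milstein_mom2_coeff a sig\<bar>) \<le> 1/2"
      and K3: "\<bar>milstein_mom3_coeff a sig dt\<bar> \<le> K3" and K4: "\<bar>milstein_mom4_coeff a sig dt\<bar> \<le> K4"
      and ms_gap: "a + sig^2 \<noteq> 0 \<Longrightarrow> C1 * dt < \<bar>a + sig^2\<bar>"
      and as_gap: "a \<noteq> 0 \<Longrightarrow> C2 * sqrt dt < \<bar>a\<bar>"
      using small[of dt] by (auto simp: W_def)
    interpret milstein_scheme M B dt a sig r0
      using assms(2) dt drift r0 by unfold_locales auto
    have "milstein_rho lam eps sig x0 y0 B dt = rho"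
      by (intro ext) (simp add: milstein_rho_eq_prod rho_def flip: a_def r0_def)
    moreover have "lam + eps\<^sup>2 / 2 + sig\<^sup>2 / 2 = a + sig^2"
      by (simp add: a_def)
    moreover note ms_exponent_bounds[OF ms_small _ ms_gap] as_exponent_bounds[OF K3 K4 _ as_gap]
    ultimately show ?case
      unfolding Let_def a_def[symmetric] by (simp add: C1_def C2_def W_def)
  qed
qed

end
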